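(* Let $\lambda$ be a partition with $n$ parts and let $\beta \in U_\lambda(n)$. If $\beta \in UGC_\lambda(n) \cap UBP_\lambda(n)$, then the terminal pair $(\lambda,\beta)$ is nonpermutable.
   Context: Fix an integer $n \geq 1$ and write $[k] = \{1,\dots,k\}$. A partition is $\lambda = (\lambda_1,\dots,\lambda_n)$ with $\lambda_1 \geq \dots \geq \lambda_n \geq 0$ integers. Let $R_\lambda \subseteq [n-1]$ be the set of $q \in [n-1]$ with $\lambda_q > \lambda_{q+1}$; write its elements $q_1 < \dots < q_r$, and set $q_0 := 0$, $q_{r+1} := n$. For $h \in [r+1]$ the $h$-th carrel is the index interval $\{q_{h-1}+1,\dots,q_h\}$. A $\lambda$-tuple is an $n$-tuple $\beta$ with entries in $[n]$, considered with this carrel structure; it is upper if $\beta_i \geq i$ for all $i$. $U_\lambda(n)$ is the set of upper $\lambda$-tuples. Critical indices: for $\beta \in U_\lambda(n)$ and $h \in [r+1]$, set $x_1 := q_h$; given $x_{u-1}$, if some index $x$ with $q_{h-1} < x < x_{u-1}$ satisfies $\beta_{x_{u-1}} - \beta_x > x_{u-1} - x$, let $x_u$ be the largest such $x$, otherwise stop. The $x_u$ are the critical indices of $\beta$ in carrel $h$; the pairs $(x_u,\beta_{x_u})$ form its critical list. For $i \in [n]$ let $x(i)$ be the smallest critical index in the carrel of $i$ with $x(i) \geq i$. The $\lambda$-platform is $\Xi_\lambda(\beta) := \xi$ with $\xi_i := \beta_{x(i)}$. The critical list is a flag critical list if for every $h \in [r]$, $\beta_{q_h} \leq \beta_k$ where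 $k$ is the smallest critical index of $\beta$ in carrel $h+1$. $UGC_\lambda(n)$ is the set of $\beta \in U_\lambda(n)$ with flag critical list; $UBP_\lambda(n)$ is the set of $\beta \in U_\lambda(n)$ with $\beta_i \leq \Xi_\lambda(\beta)_i$ for all $i$. Lattice paths: lattice points are integer pairs $(a,b)$ with $a \geq 0$, $b \geq 1$. A lattice path is a sequence of lattice points each consecutive step of which is $(a,b) \to (a+1,b)$ or $(a,b) \to (a,b+1)$. An $n$-path is $(\Lambda_1,\dots,\Lambda_n)$ with $\Lambda_m$ a lattice path starting at $(n-m,m)$. The terminals of $(\lambda,\beta)$ are $P_m := (\lambda_m + n - m, \beta_m)$, $m \in [n]$. For a permutation $\pi$ of $[n]$, $\mathcal{LD}_\lambda(\beta;\pi)$ is the set of $n$-paths with $\Lambda_m$ ending at $P_{\pi_m}$ for every $m$ and no two distinct components sharing a lattice point. The pair $(\lambda,\beta)$ is nonpermutable if $\mathcal{LD}_\lambda(\beta;\pi) = \emptyset$ for every permutation $\pi \neq (1,\dots,n)$. *)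

theory Defs
  imports "HOL-Combinatorics.Permutations"
begin

text \<open>Indices are 1-based: a partition / tuple is a function nat => nat, only its
values on {1..n} matter.\<close>

definition is_partition :: "nat \<Rightarrow> (nat \<Rightarrow> nat) \<Rightarrow> bool" where
  "is_partition n lam \<longleftrightarrow> (\<forall>i\<in>{1..<n}. lam (Suc i) \<le> lam i)"

definition Rset :: "nat \<Rightarrow> (nat \<Rightarrow> nat) \<Rightarrow> nat set" where
  "Rset n lam = {q \<in> {1..n-1}. lam (Suc q) < lam q}"

definition qq :: "nat \<Rightarrow> (nat \<Rightarrow> nat) \<Rightarrow> nat \<Rightarrow> nat" where
  "qq n lam h = (if h = 0 then 0
                 else if h \<le> card (Rset n lam) then sorted_list_of_set (Rset n lam) ! (h - 1)
                 else n)"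

definition num_R :: "nat \<Rightarrow> (nat \<Rightarrow> nat) \<Rightarrow> nat" where
  "num_R n lam = card (Rset n lam)"

definition lam_tuple :: "nat \<Rightarrow> (nat \<Rightarrow> nat) \<Rightarrow> bool" where
  "lam_tuple n beta \<longleftrightarrow> (\<forall>i\<in>{1..n}. 1 \<le> beta i \<and> beta i \<le> n)"

definition U_lam :: "nat \<Rightarrow> (nat \<Rightarrow> nat) \<Rightarrow> (nat \<Rightarrow> nat) set" where
  "U_lam n lam = {beta. lam_tuple n beta \<and> (\<forall>i\<in>{1..n}. i \<le> beta i)}"

definition crit_cands :: "(nat \<Rightarrow> nat) \<Rightarrow> nat \<Rightarrow> nat \<Rightarrow> nat set" where
  "crit_cands beta lo x = {y. lo < y \<and> y < x \<and> int (beta x) - int (beta y) > int x - int y}"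

inductive_set crit :: "(nat \<Rightarrow> nat) \<Rightarrow> nat \<Rightarrow> nat \<Rightarrow> nat set"
  for beta :: "nat \<Rightarrow> nat" and lo :: nat and hi :: nat where
  start: "hi \<in> crit beta lo hi"
| step: "x \<in> crit beta lo hi \<Longrightarrow> crit_cands beta lo x \<noteq> {} \<Longrightarrow>
         Max (crit_cands beta lo x) \<in> crit beta lo hi"

definition crit_carrel :: "nat \<Rightarrow> (nat \<Rightarrow> nat) \<Rightarrow> (nat \<Rightarrow> nat) \<Rightarrow> nat \<Rightarrow> nat set" where
  "crit_carrel n lam beta h = crit beta (qq n lam (h - 1)) (qq n lam h)"

definition carrel_of :: "nat \<Rightarrow> (nat \<Rightarrow> nat) \<Rightarrow> nat \<Rightarrow> nat" where
  "carrel_of n lam i = (THE h. h \<in> {1..num_R n lam + 1} \<and> qq n lam (h - 1) < i \<and> i \<le> qq n lam h)"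

definition xcrit :: "nat \<Rightarrow> (nat \<Rightarrow> nat) \<Rightarrow> (nat \<Rightarrow> nat) \<Rightarrow> nat \<Rightarrow> nat" where
  "xcrit n lam beta i = (LEAST x. x \<in> crit_carrel n lam beta (carrel_of n lam i) \<and> i \<le> x)"

definition platform :: "nat \<Rightarrow> (nat \<Rightarrow> nat) \<Rightarrow> (nat \<Rightarrow> nat) \<Rightarrow> nat \<Rightarrow> nat" where
  "platform n lam beta i = beta (xcrit n lam beta i)"

definition UGC :: "nat \<Rightarrow> (nat \<Rightarrow> nat) \<Rightarrow> (nat \<Rightarrow> nat) set" where
  "UGC n lam = {beta \<in> U_lam n lam.
     \<forall>h\<in>{1..num_R n lam}. beta (qq n lam h) \<le> beta (Min (crit_carrel n lam beta (h + 1)))}"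

definition UBP :: "nat \<Rightarrow> (nat \<Rightarrow> nat) \<Rightarrow> (nat \<Rightarrow> nat) set" where
  "UBP n lam = {beta \<in> U_lam n lam. \<forall>i\<in>{1..n}. beta i \<le> platform n lam beta i}"

definition lattice_path :: "(nat \<times> nat) list \<Rightarrow> bool" where
  "lattice_path p \<longleftrightarrow> p \<noteq> [] \<and> (\<forall>z\<in>set p. 1 \<le> snd z) \<and>
     (\<forall>k. Suc k < length p \<longrightarrow>
        p ! Suc k = (Suc (fst (p ! k)), snd (p ! k)) \<or> p ! Suc k = (fst (p ! k), Suc (snd (p ! k))))"

definition terminal :: "nat \<Rightarrow> (nat \<Rightarrow> nat) \<Rightarrow> (nat \<Rightarrow> nat) \<Rightarrow> nat \<Rightarrow> nat \<times> nat" where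
  "terminal n lam beta m = (lam m + n - m, beta m)"

definition LD :: "nat \<Rightarrow> (nat \<Rightarrow> nat) \<Rightarrow> (nat \<Rightarrow> nat) \<Rightarrow> (nat \<Rightarrow> nat) \<Rightarrow> (nat \<Rightarrow> (nat \<times> nat) list) set" where
  "LD n lam beta pi = {L. (\<forall>m. m \<notin> {1..n} \<longrightarrow> L m = []) \<and>
     (\<forall>m\<in>{1..n}. lattice_path (L m) \<and> hd (L m) = (n - m, m) \<and>
                  last (L m) = terminal n lam beta (pi m)) \<and>
     (\<forall>m\<in>{1..n}. \<forall>m'\<in>{1..n}. m \<noteq> m' \<longrightarrow> set (L m) \<inter> set (L m') = {})}"

definition nonpermutable :: "nat \<Rightarrow> (nat \<Rightarrow> nat) \<Rightarrow> (nat \<Rightarrow> nat) \<Rightarrow> bool" where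
  "nonpermutable n lam beta \<longleftrightarrow> (\<forall>pi. pi permutes {1..n} \<and> pi \<noteq> id \<longrightarrow> LD n lam beta pi = {})"

end

theory Submission
  imports Defs
begin

text \<open>Suppose disjoint paths realise a permutation \<open>pi \<noteq> id\<close>; let \<open>b\<close> be the largest
index moved by \<open>pi\<close> and \<open>a = pi b < b\<close>. Every \<open>c\<close> with \<open>a < c \<le> b\<close> is the target of
a path starting below row \<open>b\<close>, so its terminal lies under the path from row \<open>b\<close>, which ends
at height \<open>beta a\<close>: thus \<open>beta c < beta a\<close>. Stacking the paths of the fixed rows above
\<open>b\<close> shows that \<open>b\<close> is critical in its carrel, so some critical index \<open>c\<close> with
\<open>a < c \<le> b\<close> follows \<open>a\<close>. If \<open>a\<close> is not critical, the platform gives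
\<open>beta a \<le> beta c\<close> (UBP); if it is, the critical step from \<open>c\<close> to \<open>a\<close> gives
\<open>beta a < beta c\<close>; and if \<open>a\<close> ends its carrel, the flag condition (UGC) compares
\<open>beta a\<close> with the first critical index of the next carrel. Each case contradicts
\<open>beta c < beta a\<close>.\<close>

section \<open>Lattice paths\<close>

lemma lattice_path_ne: "lattice_path p \<Longrightarrow> p \<noteq> []"
  unfolding lattice_path_def by simp

lemma lattice_path_step:
  assumes "lattice_path p" "Suc k < length p"
  shows "fst (p!Suc k) + snd (p!Suc k) = Suc (fst (p!k) + snd (p!k))"
    and "fst (p!k) \<le> fst (p!Suc k)" and "snd (p!k) \<le> snd (p!Suc k)"
    and "fst (p!Suc k) \<le> Suc (fst (p!k))"
proof -
  have "p ! Suc k = (Suc (fst (p ! k)), snd (p ! k)) \<or> p ! Suc k = (fst (p ! k), Suc (snd (p ! k)))"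
    using assms unfolding lattice_path_def by blast
  then show "fst (p!Suc k) + snd (p!Suc k) = Suc (fst (p!k) + snd (p!k))"
    and "fst (p!k) \<le> fst (p!Suc k)" and "snd (p!k) \<le> snd (p!Suc k)"
    and "fst (p!Suc k) \<le> Suc (fst (p!k))" by auto
qed

lemma lattice_path_nth_mono:
  assumes "lattice_path p" "k \<le> l" "l < length p"
  shows "fst (p!k) \<le> fst (p!l) \<and> snd (p!k) \<le> snd (p!l)"
  using assms(2,3)
proof (induction l rule: dec_induct)
  case base then show ?case by simp
next
  case (step l)
  then show ?case using lattice_path_step[OF assms(1), of l] by (meson Suc_lessD le_trans)
qed

lemma lattice_path_coord_sum:
  assumes "lattice_path p" "k < length p"
  shows "fst (p!k) + snd (p!k) = fst (hd p) + snd (hd p) + k"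
  using assms(2)
proof (induction k)
  case 0 then show ?case using lattice_path_ne[OF assms(1)] by (simp add: hd_conv_nth)
next
  case (Suc k) then show ?case using lattice_path_step(1)[OF assms(1), of k] by simp
qed

lemma lattice_path_le_last:
  assumes "lattice_path p" "z \<in> set p"
  shows "fst z \<le> fst (last p) \<and> snd z \<le> snd (last p)"
proof -
  obtain k where "k < length p" "z = p!k" using assms(2) by (metis in_set_conv_nth)
  moreover have "last p = p ! (length p - 1)" using lattice_path_ne[OF assms(1)] by (simp add: last_conv_nth)
  ultimately show ?thesis using lattice_path_nth_mono[OF assms(1), of k "length p - 1"] by auto
qed

lemma lattice_path_hd_le:
  assumes "lattice_path p" "z \<in> set p"
  shows "fst (hd p) \<le> fst z \<and> snd (hd p) \<le> snd z"
proof -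
  obtain k where "k < length p" "z = p!k" using assms(2) by (metis in_set_conv_nth)
  moreover have "hd p = p ! 0" using lattice_path_ne[OF assms(1)] by (simp add: hd_conv_nth)
  ultimately show ?thesis using lattice_path_nth_mono[OF assms(1), of 0 k] by auto
qed

lemma lattice_path_crosses_column:
  assumes "lattice_path p" "fst (hd p) < c" "c \<le> fst (last p)"
  obtains y where "(c - 1, y) \<in> set p" "(c, y) \<in> set p"
proof -
  have ne: "p \<noteq> []" using lattice_path_ne[OF assms(1)] .
  define P where "P = (\<lambda>k. k < length p \<and> c \<le> fst (p!k))"
  define k where "k = (LEAST k. P k)"
  have "P (length p - 1)" using ne assms(3) unfolding P_def by (simp add: last_conv_nth)
  then have Pk: "P k" unfolding k_def by (rule LeastI)
  have "k \<noteq> 0"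
  proof
    assume "k = 0"
    with Pk have "c \<le> fst (p!0)" unfolding P_def by blast
    moreover have "fst (hd p) = fst (p!0)" using hd_conv_nth[OF ne] by simp
    ultimately show False using assms(2) by linarith
  qed
  then obtain j where j: "k = Suc j" by (cases k) auto
  have "\<not> P j"
  proof
    assume "P j"
    then have "k \<le> j" unfolding k_def by (rule Least_le)
    then show False using j by simp
  qed
  then have left: "fst (p!j) < c" using Pk j unfolding P_def by auto
  have right: "Suc j < length p" "c \<le> fst (p ! Suc j)" using Pk j unfolding P_def by auto
  have "p ! Suc j = (Suc (fst (p ! j)), snd (p ! j)) \<or> p ! Suc j = (fst (p ! j), Suc (snd (p ! j)))"
    using assms(1) right(1) unfolding lattice_path_def by blast
  with left right(2) have "p ! Suc j = (c, snd (p!j))" "p ! j = (c - 1, snd (p!j))"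
    by (auto simp: prod_eq_iff)
  moreover have "p ! Suc j \<in> set p" "p ! j \<in> set p" using right(1) by auto
  ultimately show ?thesis using that by metis
qed

text \<open>Two disjoint paths starting on the same antidiagonal stay strictly ordered there: the
\<open>k\<close>-th points of both lie on a common antidiagonal, so they could only swap order by meeting.\<close>

lemma disjoint_lattice_paths_nth_less:
  assumes p: "lattice_path p" and q: "lattice_path q"
    and start: "fst (hd q) < fst (hd p)"
    and diag: "fst (hd p) + snd (hd p) = fst (hd q) + snd (hd q)"
    and disj: "set p \<inter> set q = {}"
    and k: "k < length p" "k < length q"
  shows "fst (q!k) < fst (p!k)"
  using k
proof (induction k)
  case 0 then show ?case using start lattice_path_ne[OF p] lattice_path_ne[OF q] by (simp add: hd_conv_nth)
next
  case (Suc k)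
  have "fst (q!Suc k) \<le> Suc (fst (q!k))" using lattice_path_step(4)[OF q, of k] Suc by auto
  moreover have "fst (p!k) \<le> fst (p!Suc k)" using lattice_path_step(2)[OF p, of k] Suc by auto
  moreover have "fst (q!k) < fst (p!k)" using Suc by auto
  moreover have "fst (q!Suc k) \<noteq> fst (p!Suc k)"
  proof
    assume fst_eq: "fst (q!Suc k) = fst (p!Suc k)"
    moreover have "fst (p!Suc k) + snd (p!Suc k) = fst (q!Suc k) + snd (q!Suc k)"
      using lattice_path_coord_sum[OF p Suc.prems(1)] lattice_path_coord_sum[OF q Suc.prems(2)] diag
      by simp
    ultimately have "q!Suc k = p!Suc k" by (simp add: prod_eq_iff)
    then show False using disj Suc.prems by (metis disjoint_iff nth_mem)
  qed
  ultimately show ?case by linarith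
qed

lemma disjoint_lattice_paths_below:
  assumes p: "lattice_path p" and q: "lattice_path q"
    and start: "fst (hd q) < fst (hd p)"
    and diag: "fst (hd p) + snd (hd p) = fst (hd q) + snd (hd q)"
    and disj: "set p \<inter> set q = {}"
    and xy: "(x, y) \<in> set p" and xy': "(x, y') \<in> set q"
  shows "y < y'"
proof (rule ccontr)
  assume "\<not> y < y'"
  obtain k1 where k1: "k1 < length p" "p!k1 = (x,y)" using xy by (metis in_set_conv_nth)
  obtain k2 where k2: "k2 < length q" "q!k2 = (x,y')" using xy' by (metis in_set_conv_nth)
  have "x + y = fst (hd p) + snd (hd p) + k1" using lattice_path_coord_sum[OF p k1(1)] k1 by simp
  moreover have "x + y' = fst (hd p) + snd (hd p) + k2" using lattice_path_coord_sum[OF q k2(1)] k2 diag by simp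
  ultimately have "k2 \<le> k1" and k12: "k2 = k1 \<Longrightarrow> y = y'" using \<open>\<not> y < y'\<close> by linarith+
  show False
  proof (cases "k2 = k1")
    case True then show False using k12 disj xy xy' by blast
  next
    case False
    have "fst (q!k2) < fst (p!k2)"
      using disjoint_lattice_paths_nth_less[OF p q start diag disj _ k2(1)] \<open>k2 \<le> k1\<close> k1(1) by simp
    moreover have "fst (p!k2) \<le> fst (p!k1)" using lattice_path_nth_mono[OF p \<open>k2 \<le> k1\<close> k1(1)] by simp
    ultimately show False using k1 k2 by simp
  qed
qed

section \<open>Critical indices\<close>

lemma crit_cands_subset: "crit_cands beta lo x \<subseteq> {lo<..<x}"
  unfolding crit_cands_def by auto

lemma finite_crit_cands: "finite (crit_cands beta lo x)"
  by (rule finite_subset[OF crit_cands_subset]) simp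

lemma Max_crit_cands:
  assumes "crit_cands beta lo x \<noteq> {}"
  shows "Max (crit_cands beta lo x) \<in> crit_cands beta lo x" "lo < Max (crit_cands beta lo x)"
    "Max (crit_cands beta lo x) < x"
  using Max_in[OF finite_crit_cands assms] crit_cands_subset[of beta lo x] by auto

lemma crit_bounds: "z \<in> crit beta lo hi \<Longrightarrow> lo < hi \<Longrightarrow> lo < z \<and> z \<le> hi"
proof (induction rule: crit.induct)
  case start then show ?case by simp
next
  case (step x) then show ?case using Max_crit_cands[OF step(2)] by auto
qed

lemma finite_crit: "lo < hi \<Longrightarrow> finite (crit beta lo hi)"
  by (rule finite_subset[of _ "{lo<..hi}"]) (auto dest: crit_bounds)

text \<open>The critical indices form the orbit of \<open>hi\<close> under \<open>crit_next\<close>, which decreases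
strictly until no candidate is left and is stationary from then on.\<close>

definition crit_next :: "(nat \<Rightarrow> nat) \<Rightarrow> nat \<Rightarrow> nat \<Rightarrow> nat" where
  "crit_next beta lo x = (if crit_cands beta lo x = {} then x else Max (crit_cands beta lo x))"

lemma crit_next_le: "crit_next beta lo x \<le> x"
  using Max_crit_cands(3)[of beta lo x] unfolding crit_next_def by (auto simp: less_imp_le)

lemma crit_eq_crit_next_iterate: "z \<in> crit beta lo hi \<Longrightarrow> \<exists>k. z = (crit_next beta lo ^^ k) hi"
proof (induction rule: crit.induct)
  case start then show ?case by (metis funpow_0)
next
  case (step x)
  then obtain k where "x = (crit_next beta lo ^^ k) hi" by blast
  then have "Max (crit_cands beta lo x) = (crit_next beta lo ^^ Suc k) hi"
    using step(2) by (simp add: crit_next_def)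
  then show ?case by blast
qed

lemma crit_next_iterate_antimono:
  "k \<le> k' \<Longrightarrow> (crit_next beta lo ^^ k') hi \<le> (crit_next beta lo ^^ k) hi"
proof (induction k' rule: dec_induct)
  case base then show ?case by simp
next
  case (step k') then show ?case using crit_next_le[of beta lo "(crit_next beta lo ^^ k') hi"] by simp
qed

lemma crit_next_iterate_stable:
  assumes "crit_cands beta lo ((crit_next beta lo ^^ k) hi) = {}" "k \<le> k'"
  shows "(crit_next beta lo ^^ k') hi = (crit_next beta lo ^^ k) hi"
  using assms(2)
proof (induction k' rule: dec_induct)
  case base then show ?case by simp
next
  case (step m)
  then have "(crit_next beta lo ^^ Suc m) hi = crit_next beta lo ((crit_next beta lo ^^ k) hi)" by simp
  also have "\<dots> = (crit_next beta lo ^^ k) hi" using assms(1) unfolding crit_next_def by simp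
  finally show ?case .
qed

lemma crit_le_Max_cands:
  assumes "z \<in> crit beta lo hi" "x \<in> crit beta lo hi" "z < x"
  shows "crit_cands beta lo x \<noteq> {}" "z \<le> Max (crit_cands beta lo x)"
proof -
  obtain k1 where k1: "z = (crit_next beta lo ^^ k1) hi" using crit_eq_crit_next_iterate[OF assms(1)] by blast
  obtain k2 where k2: "x = (crit_next beta lo ^^ k2) hi" using crit_eq_crit_next_iterate[OF assms(2)] by blast
  have "k2 < k1"
    using crit_next_iterate_antimono[of k1 k2 beta lo hi] k1 k2 assms(3) by (metis leI not_le)
  show ne: "crit_cands beta lo x \<noteq> {}"
  proof
    assume "crit_cands beta lo x = {}"
    then have "(crit_next beta lo ^^ k1) hi = x"
      using crit_next_iterate_stable[of beta lo k2 hi k1] k2 \<open>k2 < k1\<close> by simp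
    then show False using k1 assms(3) by simp
  qed
  have "z \<le> (crit_next beta lo ^^ Suc k2) hi"
    using crit_next_iterate_antimono[of "Suc k2" k1 beta lo hi] k1 \<open>k2 < k1\<close> by simp
  also have "\<dots> = Max (crit_cands beta lo x)" using ne k2 by (simp add: crit_next_def)
  finally show "z \<le> Max (crit_cands beta lo x)" .
qed

lemma crit_least_above:
  assumes "z < hi"
  obtains x where "x \<in> crit beta lo hi" "z < x" "\<forall>y\<in>crit beta lo hi. z < y \<longrightarrow> x \<le> y"
proof -
  let ?x = "LEAST x. x \<in> crit beta lo hi \<and> z < x"
  have "hi \<in> crit beta lo hi \<and> z < hi" using assms by (simp add: crit.start)
  then have "?x \<in> crit beta lo hi \<and> z < ?x" by (rule LeastI)
  moreover have "\<forall>y\<in>crit beta lo hi. z < y \<longrightarrow> ?x \<le> y" by (auto intro: Least_le)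
  ultimately show ?thesis using that by blast
qed

context
  fixes beta lo hi x z
  assumes x_crit: "x \<in> crit beta lo hi" and z_less: "z < x"
    and x_least: "\<forall>y\<in>crit beta lo hi. z < y \<longrightarrow> x \<le> y"
begin

lemma crit_cands_least_above_le: "c \<in> crit_cands beta lo x \<Longrightarrow> c \<le> z"
proof -
  assume c: "c \<in> crit_cands beta lo x"
  then have ne: "crit_cands beta lo x \<noteq> {}" by auto
  have "Max (crit_cands beta lo x) \<in> crit beta lo hi" using crit.step[OF x_crit ne] .
  then have "\<not> z < Max (crit_cands beta lo x)" using x_least Max_crit_cands(3)[OF ne] by force
  moreover have "c \<le> Max (crit_cands beta lo x)" using finite_crit_cands c by (rule Max_ge)
  ultimately show "c \<le> z" by simp
qed

lemma crit_cand_least_above_crit: "z \<in> crit_cands beta lo x \<Longrightarrow> z \<in> crit beta lo hi"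
proof -
  assume z: "z \<in> crit_cands beta lo x"
  then have ne: "crit_cands beta lo x \<noteq> {}" by auto
  have "z \<le> Max (crit_cands beta lo x)" using finite_crit_cands z by (rule Max_ge)
  moreover have "Max (crit_cands beta lo x) \<le> z"
    using crit_cands_least_above_le Max_crit_cands(1)[OF ne] by blast
  ultimately show ?thesis using crit.step[OF x_crit ne] by simp
qed

lemma crit_least_above_cand: "z \<in> crit beta lo hi \<Longrightarrow> z \<in> crit_cands beta lo x"
proof -
  assume z: "z \<in> crit beta lo hi"
  have ne: "crit_cands beta lo x \<noteq> {}" and "z \<le> Max (crit_cands beta lo x)"
    using crit_le_Max_cands[OF z x_crit z_less] by auto
  moreover have "Max (crit_cands beta lo x) \<le> z"
    using crit_cands_least_above_le Max_crit_cands(1)[OF ne] by blast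
  ultimately show ?thesis using Max_crit_cands(1)[OF ne] by simp
qed

end

section \<open>Carrels\<close>

lemma Rset_subset: "Rset n lam \<subseteq> {1..n-1}"
  unfolding Rset_def by auto

lemma finite_Rset: "finite (Rset n lam)"
  by (rule finite_subset[OF Rset_subset]) simp

lemma qq_0: "qq n lam 0 = 0"
  unfolding qq_def by simp

lemma qq_above_num_R: "num_R n lam < h \<Longrightarrow> qq n lam h = n"
  unfolding qq_def num_R_def by auto

lemma qq_nth:
  "1 \<le> h \<Longrightarrow> h \<le> num_R n lam \<Longrightarrow> qq n lam h = sorted_list_of_set (Rset n lam) ! (h - 1)"
  unfolding qq_def num_R_def by auto

lemma length_sorted_Rset: "length (sorted_list_of_set (Rset n lam)) = num_R n lam"
  unfolding num_R_def by simp

lemma qq_in_Rset: "1 \<le> h \<Longrightarrow> h \<le> num_R n lam \<Longrightarrow> qq n lam h \<in> Rset n lam"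
  using nth_mem[of "h - 1" "sorted_list_of_set (Rset n lam)"] qq_nth[of h n lam]
    length_sorted_Rset[of n lam] finite_Rset[of n lam] by simp

lemma Rset_qq_image: "e \<in> Rset n lam \<Longrightarrow> \<exists>h. 1 \<le> h \<and> h \<le> num_R n lam \<and> qq n lam h = e"
proof -
  assume "e \<in> Rset n lam"
  then have "e \<in> set (sorted_list_of_set (Rset n lam))" using finite_Rset by simp
  then obtain t where "t < num_R n lam" "sorted_list_of_set (Rset n lam) ! t = e"
    by (metis in_set_conv_nth length_sorted_Rset)
  then show ?thesis using qq_nth[of "Suc t" n lam] by (intro exI[of _ "Suc t"]) auto
qed

lemma qq_strict_mono:
  assumes "0 < n" "h < h'" "h' \<le> Suc (num_R n lam)"
  shows "qq n lam h < qq n lam h'"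
proof -
  have inner: "0 < qq n lam k \<and> qq n lam k < n" if "1 \<le> k" "k \<le> num_R n lam" for k
    using qq_in_Rset[OF that] Rset_subset[of n lam] by fastforce
  show ?thesis
  proof (cases "h' = Suc (num_R n lam)")
    case True
    then have "qq n lam h' = n" using qq_above_num_R by simp
    moreover have "qq n lam h < n"
    proof (cases "h = 0")
      case True then show ?thesis using assms(1) by (simp add: qq_0)
    next
      case False then show ?thesis using inner[of h] assms \<open>h' = Suc (num_R n lam)\<close> by simp
    qed
    ultimately show ?thesis by simp
  next
    case False
    then have h': "h' \<le> num_R n lam" using assms by simp
    show ?thesis
    proof (cases "h = 0")
      case True then show ?thesis using inner[of h'] assms h' by (simp add: qq_0)
    next
      case False
      let ?s = "sorted_list_of_set (Rset n lam)"
      have "sorted_wrt (<) ?s" by simp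
      moreover have "h - 1 < h' - 1" "h' - 1 < length ?s" using assms False h' length_sorted_Rset by auto
      ultimately have "?s ! (h - 1) < ?s ! (h' - 1)" using sorted_wrt_nth_less by blast
      then show ?thesis using qq_nth[of h n lam] qq_nth[of h' n lam] assms False h' by simp
    qed
  qed
qed

lemma qq_mono:
  assumes "0 < n" "h \<le> h'" "h' \<le> Suc (num_R n lam)"
  shows "qq n lam h \<le> qq n lam h'"
  using qq_strict_mono[OF assms(1), of h h' lam] assms by (cases "h = h'") auto

lemma qq_less_imp_less:
  assumes "0 < n" "qq n lam h < qq n lam h'" "h \<le> Suc (num_R n lam)"
  shows "h < h'"
  using qq_mono[OF assms(1), of h' h lam] assms by (metis leI not_less)

lemma carrel_unique:
  assumes "0 < n" "1 \<le> g" "g \<le> Suc (num_R n lam)" "qq n lam (g - 1) < c" "c \<le> qq n lam g"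
     and "1 \<le> g'" "g' \<le> Suc (num_R n lam)" "qq n lam (g' - 1) < c" "c \<le> qq n lam g'"
  shows "g = g'"
proof -
  have "g - 1 < g'" using qq_less_imp_less[OF assms(1), of lam "g - 1" g'] assms by linarith
  moreover have "g' - 1 < g" using qq_less_imp_less[OF assms(1), of lam "g' - 1" g] assms by linarith
  ultimately show ?thesis using assms by linarith
qed

lemma carrel_of_eqI:
  assumes "0 < n" "1 \<le> g" "g \<le> Suc (num_R n lam)" "qq n lam (g - 1) < c" "c \<le> qq n lam g"
  shows "carrel_of n lam c = g"
  unfolding carrel_of_def
proof (rule the_equality)
  fix h assume "h \<in> {1..num_R n lam + 1} \<and> qq n lam (h - 1) < c \<and> c \<le> qq n lam h"
  then show "h = g" using carrel_unique[OF assms(1), of h lam c g] assms by auto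
qed (use assms in simp)

definition carrel_lo :: "nat \<Rightarrow> (nat \<Rightarrow> nat) \<Rightarrow> nat \<Rightarrow> nat" where
  "carrel_lo n lam i = qq n lam (carrel_of n lam i - 1)"

definition carrel_hi :: "nat \<Rightarrow> (nat \<Rightarrow> nat) \<Rightarrow> nat \<Rightarrow> nat" where
  "carrel_hi n lam i = qq n lam (carrel_of n lam i)"

lemma crit_carrel_of:
  "crit_carrel n lam beta (carrel_of n lam i) = crit beta (carrel_lo n lam i) (carrel_hi n lam i)"
  unfolding crit_carrel_def carrel_lo_def carrel_hi_def ..

lemma carrel_of_bounds:
  assumes "1 \<le> i" "i \<le> n"
  shows "1 \<le> carrel_of n lam i" "carrel_of n lam i \<le> Suc (num_R n lam)"
    and "carrel_lo n lam i < i" "i \<le> carrel_hi n lam i" "carrel_hi n lam i \<le> n"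
proof -
  define g where "g = (LEAST g. i \<le> qq n lam g)"
  have "i \<le> qq n lam (Suc (num_R n lam))" using qq_above_num_R assms by simp
  then have g: "i \<le> qq n lam g" "g \<le> Suc (num_R n lam)"
    unfolding g_def by (auto intro: LeastI Least_le)
  have "g \<noteq> 0" using g assms qq_0[of n lam] by (metis le_zero_eq not_one_le_zero)
  moreover have "\<not> i \<le> qq n lam (g - 1)"
  proof
    assume "i \<le> qq n lam (g - 1)"
    then have "g \<le> g - 1" unfolding g_def by (rule Least_le)
    then show False using \<open>g \<noteq> 0\<close> by simp
  qed
  ultimately have "carrel_of n lam i = g" using g assms by (intro carrel_of_eqI) auto
  moreover have "qq n lam g \<le> n"
    using qq_mono[of n g "Suc (num_R n lam)" lam] qq_above_num_R[of n lam] g assms by simp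
  ultimately show "1 \<le> carrel_of n lam i" "carrel_of n lam i \<le> Suc (num_R n lam)"
    "carrel_lo n lam i < i" "i \<le> carrel_hi n lam i" "carrel_hi n lam i \<le> n"
    using \<open>g \<noteq> 0\<close> \<open>\<not> i \<le> qq n lam (g - 1)\<close> g unfolding carrel_lo_def carrel_hi_def by auto
qed

lemma carrel_of_mono:
  assumes "1 \<le> i" "i \<le> j" "j \<le> n"
  shows "carrel_of n lam i \<le> carrel_of n lam j"
proof (rule ccontr)
  assume "\<not> ?thesis"
  then have "carrel_hi n lam j \<le> carrel_lo n lam i"
    using qq_mono[of n "carrel_of n lam j" "carrel_of n lam i - 1" lam]
      carrel_of_bounds[of i n lam] assms unfolding carrel_lo_def carrel_hi_def by simp
  then show False using carrel_of_bounds[of i n lam] carrel_of_bounds[of j n lam] assms by simp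
qed

lemma carrel_hi_less:
  assumes "1 \<le> i" "i \<le> n" "1 \<le> j" "j \<le> n" "carrel_of n lam i < carrel_of n lam j"
  shows "carrel_hi n lam i < j"
proof -
  have "carrel_hi n lam i \<le> carrel_lo n lam j"
    using qq_mono[of n "carrel_of n lam i" "carrel_of n lam j - 1" lam]
      carrel_of_bounds[of j n lam] assms unfolding carrel_lo_def carrel_hi_def by simp
  then show ?thesis using carrel_of_bounds(3)[of j n lam] assms by simp
qed

lemma carrel_of_Suc_inner:
  assumes "1 \<le> i" "i < carrel_hi n lam i" "i \<le> n"
  shows "carrel_of n lam (Suc i) = carrel_of n lam i"
  using carrel_of_bounds[of i n lam] assms
  by (intro carrel_of_eqI) (auto simp: carrel_lo_def carrel_hi_def)

lemma carrel_of_Suc_top: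
  assumes "1 \<le> i" "i < n" "carrel_hi n lam i = i"
  shows "carrel_of n lam (Suc i) = Suc (carrel_of n lam i)" "carrel_lo n lam (Suc i) = i"
proof -
  let ?g = "carrel_of n lam i"
  have "?g \<noteq> Suc (num_R n lam)" using assms qq_above_num_R[of n lam] unfolding carrel_hi_def by force
  then have "Suc ?g \<le> Suc (num_R n lam)" using carrel_of_bounds(2)[of i n lam] assms by simp
  moreover have "i < qq n lam (Suc ?g)" using qq_strict_mono[of n ?g "Suc ?g" lam] assms calculation
    unfolding carrel_hi_def by simp
  ultimately show "carrel_of n lam (Suc i) = Suc ?g" using assms unfolding carrel_hi_def
    by (intro carrel_of_eqI) auto
  then show "carrel_lo n lam (Suc i) = i" using assms unfolding carrel_lo_def carrel_hi_def by simp
qed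

lemma partition_antimono:
  assumes "is_partition n lam" "1 \<le> c" "c \<le> c'" "c' \<le> n"
  shows "lam c' \<le> lam c"
  using assms(3,4)
proof (induction c' rule: dec_induct)
  case (step m)
  then have "lam (Suc m) \<le> lam m" using assms(1,2) unfolding is_partition_def by auto
  then show ?case using step by simp
qed simp

lemma partition_const_in_carrel:
  assumes "is_partition n lam" "1 \<le> i" "i \<le> n" "i \<le> j" "j \<le> carrel_hi n lam i"
  shows "lam j = lam i"
  using assms(4,5)
proof (induction j rule: dec_induct)
  case (step m)
  have n0: "0 < n" using assms by simp
  have m: "m \<in> {1..<n}" using step assms carrel_of_bounds(5)[of i n lam] by auto
  have "m \<notin> Rset n lam"
  proof
    assume "m \<in> Rset n lam"
    then obtain t where t: "1 \<le> t" "t \<le> num_R n lam" "qq n lam t = m" using Rset_qq_image by blast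
    have "carrel_of n lam i - 1 < t"
      using qq_less_imp_less[OF n0, of lam "carrel_of n lam i - 1" t] t step carrel_of_bounds[of i n lam] assms
      unfolding carrel_lo_def by simp
    moreover have "t < carrel_of n lam i"
      using qq_less_imp_less[OF n0, of lam t "carrel_of n lam i"] t step unfolding carrel_hi_def by simp
    ultimately show False by simp
  qed
  then have "\<not> lam (Suc m) < lam m" using m unfolding Rset_def by auto
  moreover have "lam (Suc m) \<le> lam m" using m assms(1) unfolding is_partition_def by auto
  ultimately have "lam (Suc m) = lam m" by simp
  then show ?case using step by simp
qed simp

section \<open>A family of disjoint paths realising a nontrivial permutation\<close>

locale disjoint_path_system =
  fixes n :: nat and lam beta pi :: "nat \<Rightarrow> nat" and L :: "nat \<Rightarrow> (nat \<times> nat) list"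
  assumes partition: "is_partition n lam"
    and permutes: "pi permutes {1..n}"
    and moved: "pi \<noteq> id"
    and L_LD: "L \<in> LD n lam beta pi"
begin

definition col :: "nat \<Rightarrow> nat" where
  "col m = lam m + n - m"

lemma path:
  assumes "m \<in> {1..n}"
  shows "lattice_path (L m)" "hd (L m) = (n - m, m)" "last (L m) = (col (pi m), beta (pi m))"
  using L_LD assms unfolding LD_def terminal_def col_def by auto

lemma terminal_in_path: "m \<in> {1..n} \<Longrightarrow> (col (pi m), beta (pi m)) \<in> set (L m)"
  using path[of m] last_in_set lattice_path_ne by metis

lemma path_below:
  assumes "m \<in> {1..n}" "m' \<in> {1..n}" "m < m'" "(x, y) \<in> set (L m)" "(x, y') \<in> set (L m')"
  shows "y < y'"
proof (rule disjoint_lattice_paths_below[OF path(1)[OF assms(1)] path(1)[OF assms(2)] _ _ _ assms(4,5)])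
  show "set (L m) \<inter> set (L m') = {}" using L_LD assms(1-3) unfolding LD_def by auto
qed (use assms path(2) in auto)

lemma path_crosses_column:
  assumes "m \<in> {1..n}" "n - m < x" "x \<le> col (pi m)"
  obtains y where "(x - 1, y) \<in> set (L m)" "(x, y) \<in> set (L m)"
  by (rule lattice_path_crosses_column[OF path(1)[OF assms(1)], of x]) (use assms path that in auto)

lemma col_antimono: "1 \<le> c' \<Longrightarrow> c' \<le> c \<Longrightarrow> c \<le> n \<Longrightarrow> col c \<le> col c'"
  using partition_antimono[OF partition, of c' c] unfolding col_def by simp

definition b :: nat where
  "b = Max {m \<in> {1..n}. pi m \<noteq> m}"

definition a :: nat where
  "a = pi b"

lemma b_moved: "b \<in> {1..n}" "pi b \<noteq> b"
proof -
  have "{m \<in> {1..n}. pi m \<noteq> m} \<noteq> {}"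
    using moved permutes_not_in[OF permutes] by (metis (mono_tags, lifting) empty_Collect_eq eq_id_iff)
  then have "b \<in> {m \<in> {1..n}. pi m \<noteq> m}" unfolding b_def by (intro Max_in) auto
  then show "b \<in> {1..n}" "pi b \<noteq> b" by auto
qed

lemma fixed_above_b: "b < m \<Longrightarrow> pi m = m"
proof (rule ccontr)
  assume "b < m" "pi m \<noteq> m"
  then have "m \<in> {m \<in> {1..n}. pi m \<noteq> m}" using permutes_not_in[OF permutes] by blast
  then have "m \<le> b" unfolding b_def by (intro Max_ge) auto
  then show False using \<open>b < m\<close> by simp
qed

lemma a_in: "a \<in> {1..n}"
  unfolding a_def using permutes_in_image[OF permutes] b_moved(1) by blast

lemma a_less_b: "a < b"
proof (rule ccontr)
  assume "\<not> a < b"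
  then have "b < a" using b_moved(2) unfolding a_def by simp
  then have "pi a = pi b" using fixed_above_b unfolding a_def by simp
  then show False using b_moved(2) permutes_inj[OF permutes] unfolding a_def by (metis injD)
qed

lemma preimage_below_b:
  assumes "a < c" "c \<le> b"
  obtains k where "k \<in> {1..n}" "k < b" "pi k = c"
proof -
  have "c \<in> {1..n}" using assms a_in b_moved(1) by auto
  then obtain k where k: "k \<in> {1..n}" "pi k = c"
    using permutes_image[OF permutes] by (metis imageE)
  have "k \<noteq> b" using k assms unfolding a_def by auto
  moreover have "\<not> b < k" using fixed_above_b k assms by auto
  ultimately show ?thesis using that k by simp
qed

lemma col_b: "n - b < col b"
proof -
  obtain i where i: "i \<in> {1..n}" "i < b" "pi i = b" using preimage_below_b a_less_b by blast
  have "n - i \<le> col b"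
    using lattice_path_hd_le[OF path(1)[OF i(1)] terminal_in_path[OF i(1)]] path(2)[OF i(1)] i(3) by simp
  then show ?thesis using i b_moved(1) by simp
qed

lemma path_b_crosses:
  assumes "a \<le> c" "c \<le> b"
  obtains y where "(col c - 1, y) \<in> set (L b)" "(col c, y) \<in> set (L b)"
proof (rule path_crosses_column[OF b_moved(1)])
  show "n - b < col c" using col_b col_antimono[of c b] assms a_in b_moved(1) by simp
  show "col c \<le> col (pi b)" using col_antimono[of a c] assms a_in b_moved(1) unfolding a_def by simp
qed (use that in auto)

lemma path_b_above_terminal:
  assumes "a < c" "c \<le> b" "(col c, y) \<in> set (L b)"
  shows "beta c < y"
proof -
  obtain k where k: "k \<in> {1..n}" "k < b" "pi k = c" using preimage_below_b assms by blast
  show ?thesis using path_below[OF k(1) b_moved(1) k(2) _ assms(3)] terminal_in_path[OF k(1)] k(3) by simp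
qed

lemma terminal_below_a:
  assumes "a < c" "c \<le> b"
  shows "beta c < beta a"
proof -
  obtain y where "(col c, y) \<in> set (L b)" using path_b_crosses[OF less_imp_le[OF assms(1)] assms(2)] .
  then show ?thesis
    using path_b_above_terminal[OF assms] lattice_path_le_last[OF path(1)[OF b_moved(1)]]
      path(3)[OF b_moved(1)] unfolding a_def by fastforce
qed

text \<open>Along a stretch above \<open>b\<close> where \<open>lam\<close> is constant the paths of consecutive rows are
stacked, and the path of row \<open>b\<close> passes above the terminal of \<open>b\<close>; hence the heights of the
(fixed) terminals rise by more than one per step.\<close>

lemma terminal_rise:
  assumes "b < c" "c \<le> n" "\<forall>d. b \<le> d \<longrightarrow> d \<le> c \<longrightarrow> lam d = lam b"
  shows "beta b + (c - b) < beta c"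
proof -
  have lam_b: "1 \<le> lam b" using col_b b_moved(1) unfolding col_def by simp
  have "\<exists>y. beta b + k < y \<and> (col (b + k) - 1, y) \<in> set (L (b + k))" if "b + k \<le> c" for k
    using that
  proof (induction k)
    case 0
    obtain y where "(col b - 1, y) \<in> set (L b)" "(col b, y) \<in> set (L b)"
      using path_b_crosses[OF less_imp_le[OF a_less_b] order_refl] by blast
    then show ?case using path_b_above_terminal[OF a_less_b order_refl] by auto
  next
    case (Suc k)
    define d where "d = b + k"
    obtain y where y: "beta b + k < y" "(col d - 1, y) \<in> set (L d)" using Suc unfolding d_def by auto
    have d: "d \<in> {1..n}" "Suc d \<in> {1..n}" using Suc assms b_moved(1) unfolding d_def by auto
    have "lam d = lam b" "lam (Suc d) = lam b"
      by (rule assms(3)[rule_format]; use Suc.prems in \<open>simp add: d_def\<close>)+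
    then have col_Suc: "col (Suc d) = col d - 1" "n - Suc d < col (Suc d)"
      using d lam_b unfolding col_def by auto
    have "pi (Suc d) = Suc d" using fixed_above_b d_def by simp
    then obtain y' where y': "(col (Suc d) - 1, y') \<in> set (L (Suc d))" "(col (Suc d), y') \<in> set (L (Suc d))"
      using path_crosses_column[OF d(2) col_Suc(2)] by auto
    have "y < y'" using path_below[OF d(1) d(2) _ y(2)] y'(2) col_Suc(1) by simp
    then show ?case using y(1) y'(1) unfolding d_def by (intro exI[of _ y']) simp
  qed
  from this[of "c - b"] obtain y where y: "beta b + (c - b) < y" "(col c - 1, y) \<in> set (L c)"
    using assms(1) by auto
  have c: "c \<in> {1..n}" using assms b_moved(1) by simp
  have "y \<le> beta c"
    using lattice_path_le_last[OF path(1)[OF c] y(2)] path(3)[OF c] fixed_above_b[OF assms(1)] by simp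
  then show ?thesis using y(1) by simp
qed

lemma b_critical: "b \<in> crit beta (carrel_lo n lam b) (carrel_hi n lam b)"
proof (rule ccontr)
  let ?lo = "carrel_lo n lam b" and ?hi = "carrel_hi n lam b"
  assume b_not_crit: "b \<notin> crit beta ?lo ?hi"
  have bounds: "?lo < b" "b \<le> ?hi" "?hi \<le> n" using carrel_of_bounds[of b n lam] b_moved(1) by auto
  then have "b < ?hi" using b_not_crit crit.start[of ?hi beta ?lo] by (metis le_neq_implies_less)
  then obtain x where x: "x \<in> crit beta ?lo ?hi" "b < x" "\<forall>y\<in>crit beta ?lo ?hi. b < y \<longrightarrow> x \<le> y"
    by (rule crit_least_above)
  have "x \<le> ?hi" using crit_bounds[OF x(1)] bounds by simp
  have "b \<notin> crit_cands beta ?lo x" using crit_cand_least_above_crit[OF x] b_not_crit by blast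
  then have "\<not> int x - int b < int (beta x) - int (beta b)"
    using bounds x(2) unfolding crit_cands_def by simp
  moreover have "beta b + (x - b) < beta x"
  proof (rule terminal_rise[OF x(2)])
    show "x \<le> n" using \<open>x \<le> ?hi\<close> bounds by simp
    show "\<forall>d. b \<le> d \<longrightarrow> d \<le> x \<longrightarrow> lam d = lam b"
      by (intro allI impI partition_const_in_carrel[OF partition]) (use b_moved(1) \<open>x \<le> ?hi\<close> in auto)
  qed
  ultimately show False using x(2) by linarith
qed

lemma crit_up_to_b:
  assumes "1 \<le> c" "c \<le> b"
  obtains y where "y \<in> crit beta (carrel_lo n lam c) (carrel_hi n lam c)" "c \<le> y" "y \<le> b"
proof (cases "carrel_of n lam c = carrel_of n lam b")
  case True
  then show ?thesis
    using that b_critical assms unfolding carrel_lo_def carrel_hi_def by simp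
next
  case False
  then have "carrel_of n lam c < carrel_of n lam b"
    using carrel_of_mono[of c b n lam] assms b_moved(1) by simp
  then have "carrel_hi n lam c < b" using carrel_hi_less[of c n b lam] assms b_moved(1) by simp
  moreover have "c \<le> carrel_hi n lam c" using carrel_of_bounds(4)[of c n lam] assms b_moved(1) by simp
  ultimately show ?thesis using that[OF crit.start] by simp
qed

lemma crit_above_a:
  assumes "a < carrel_hi n lam a"
  obtains y where "y \<in> crit beta (carrel_lo n lam a) (carrel_hi n lam a)" "a < y" "y \<le> b"
proof -
  have "carrel_of n lam (Suc a) = carrel_of n lam a"
    using carrel_of_Suc_inner[OF _ assms] a_in by simp
  then have same: "carrel_lo n lam (Suc a) = carrel_lo n lam a" "carrel_hi n lam (Suc a) = carrel_hi n lam a"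
    unfolding carrel_lo_def carrel_hi_def by simp_all
  have "1 \<le> Suc a" "Suc a \<le> b" using a_less_b by auto
  then obtain y where "y \<in> crit beta (carrel_lo n lam (Suc a)) (carrel_hi n lam (Suc a))" "Suc a \<le> y" "y \<le> b"
    by (rule crit_up_to_b)
  then show ?thesis using that same by simp
qed

lemma a_not_critical:
  assumes "a < carrel_hi n lam a"
  shows "a \<notin> crit beta (carrel_lo n lam a) (carrel_hi n lam a)"
proof
  let ?C = "crit beta (carrel_lo n lam a) (carrel_hi n lam a)"
  assume a_crit: "a \<in> ?C"
  obtain x where x: "x \<in> ?C" "a < x" "\<forall>y\<in>?C. a < y \<longrightarrow> x \<le> y"
    using crit_least_above[OF assms] by blast
  obtain y where "y \<in> ?C" "a < y" "y \<le> b" using crit_above_a[OF assms] .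
  then have "x \<le> b" using x(3) by force
  have "a \<in> crit_cands beta (carrel_lo n lam a) x" using crit_least_above_cand[OF x a_crit] .
  then have "beta a < beta x" unfolding crit_cands_def by simp
  then show False using terminal_below_a[OF x(2) \<open>x \<le> b\<close>] by simp
qed

lemma not_UBP:
  assumes "a < carrel_hi n lam a"
  shows "beta \<notin> UBP n lam"
proof
  let ?C = "crit beta (carrel_lo n lam a) (carrel_hi n lam a)"
  assume "beta \<in> UBP n lam"
  then have ubp: "beta a \<le> beta (xcrit n lam beta a)"
    using a_in unfolding UBP_def platform_def by auto
  have x_def: "xcrit n lam beta a = (LEAST x. x \<in> ?C \<and> a \<le> x)"
    unfolding xcrit_def crit_carrel_of ..
  obtain y where y: "y \<in> ?C" "a < y" "y \<le> b" using crit_above_a[OF assms] .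
  then have "y \<in> ?C \<and> a \<le> y" by simp
  then have x: "xcrit n lam beta a \<in> ?C \<and> a \<le> xcrit n lam beta a"
    unfolding x_def by (rule LeastI)
  have "xcrit n lam beta a \<le> y" unfolding x_def by (rule Least_le) (use y in simp)
  moreover have "xcrit n lam beta a \<noteq> a" using x a_not_critical[OF assms] by auto
  ultimately have "beta (xcrit n lam beta a) < beta a" using terminal_below_a x y(3) by simp
  then show False using ubp by simp
qed

lemma not_UGC:
  assumes top: "carrel_hi n lam a = a"
  shows "beta \<notin> UGC n lam"
proof
  assume "beta \<in> UGC n lam"
  let ?g = "carrel_of n lam a"
  let ?C = "crit beta (carrel_lo n lam (Suc a)) (carrel_hi n lam (Suc a))"
  have Suc_a: "1 \<le> Suc a" "Suc a \<le> b" "Suc a \<le> n" using a_less_b b_moved(1) by auto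
  have next_carrel: "carrel_of n lam (Suc a) = Suc ?g" "carrel_lo n lam (Suc a) = a"
    using carrel_of_Suc_top[OF _ _ top] a_in Suc_a by auto
  have "?g \<in> {1..num_R n lam}"
    using carrel_of_bounds(1)[of a n lam] carrel_of_bounds(2)[of "Suc a" n lam] a_in Suc_a next_carrel
    by auto
  with \<open>beta \<in> UGC n lam\<close> have "beta (qq n lam ?g) \<le> beta (Min (crit_carrel n lam beta (?g + 1)))"
    unfolding UGC_def by auto
  then have ugc: "beta a \<le> beta (Min ?C)"
    using top crit_carrel_of[of n lam beta "Suc a"] next_carrel unfolding carrel_hi_def by simp
  obtain y where y: "y \<in> ?C" "y \<le> b" using crit_up_to_b[OF Suc_a(1,2)] by blast
  have lohi: "carrel_lo n lam (Suc a) < carrel_hi n lam (Suc a)"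
    using carrel_of_bounds(3,4)[of "Suc a" n lam] Suc_a by simp
  have "Min ?C \<in> ?C" "Min ?C \<le> y" using Min_in[OF finite_crit[OF lohi]] Min_le[OF finite_crit[OF lohi] y(1)] y(1)
    by auto
  moreover have "a < Min ?C" using crit_bounds[OF \<open>Min ?C \<in> ?C\<close> lohi] next_carrel(2) by simp
  ultimately have "beta (Min ?C) < beta a" using terminal_below_a y(2) by simp
  then show False using ugc by simp
qed

lemma not_UGC_inter_UBP: "beta \<notin> UGC n lam \<inter> UBP n lam"
  using not_UGC not_UBP carrel_of_bounds(4)[of a n lam] a_in by (cases "a < carrel_hi n lam a") auto

end

theorem proposition7p2:
  fixes n :: nat and lam beta :: "nat \<Rightarrow> nat"
  assumes "1 \<le> n"
    and "is_partition n lam"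
    and "beta \<in> U_lam n lam"
    and "beta \<in> UGC n lam \<inter> UBP n lam"
  shows "nonpermutable n lam beta"
proof -
  have "LD n lam beta pi = {}" if "pi permutes {1..n}" "pi \<noteq> id" for pi
  proof (rule ccontr)
    assume "LD n lam beta pi \<noteq> {}"
    then obtain L where "L \<in> LD n lam beta pi" by blast
    then have "disjoint_path_system n lam beta pi L"
      using assms(2) that unfolding disjoint_path_system_def by blast
    then show False using disjoint_path_system.not_UGC_inter_UBP assms(4) by blast
  qed
  then show ?thesis unfolding nonpermutable_def by blast
qed

end
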